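(* Let $V_\theta$ be a real vector space of dimension $2$ and let $M\subset V_\theta\times[0,1]$ be a dichotomous item response hypersurface with associated function $f:V_\theta\to[0,1]$. Then for every $w\in V_\theta$ there exists a nonzero $v\in V_\theta$ such that $f$ is constant on the line $w+\mathbb{R}\cdot v=\{w+\lambda v:\lambda\in\mathbb{R}\}$.
   Context: A dichotomous item response hypersurface (IRHS) is a $D=\dim V_\theta$ dimensional smooth submanifold $M$ of $V_\theta\times[0,1]$ such that for any two vectors $v,w\in V_\theta$, the intersection of $(w+\mathbb{R}\cdot v)\times[0,1]$ with $M$ is the graph of a monotonic function $w+\mathbb{R}\cdot v\to[0,1]$. A function $g:w+\mathbb{R}\cdot v\to[0,1]$ is monotonic if either $g(w+\lambda v)\le g(w+\mu v)$ for all $\lambda\le\mu$, or $g(w+\lambda v)\ge g(w+\mu v)$ for all $\lambda\le\mu$. Taking $v=0$ shows $M$ is the graph of a function $f:V_\theta\to[0,1]$, the associated function. *)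

theory Defs
  imports "HOL-Analysis.Analysis"
begin

primrec Ck_on :: "nat \<Rightarrow> 'a::real_normed_vector set \<Rightarrow> ('a \<Rightarrow> 'b::real_normed_vector) \<Rightarrow> bool" where
  "Ck_on 0 S f = continuous_on S f"
| "Ck_on (Suc k) S f =
     (f differentiable_on S \<and> (\<forall>v. Ck_on k S (\<lambda>x. frechet_derivative f (at x) v)))"

definition smooth_on_open :: "'a::real_normed_vector set \<Rightarrow> ('a \<Rightarrow> 'b::real_normed_vector) \<Rightarrow> bool" where
  "smooth_on_open S f \<longleftrightarrow> open S \<and> (\<forall>k. Ck_on k S f)"

text \<open>M is a smooth embedded submanifold of V \<times> R of dimension DIM('a) = dim V:
  locally the image of a smooth immersion of an open subset of R^D (here 'a, which has
  dimension D) that is a homeomorphism onto its image.\<close>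
definition smooth_submanifold_dimV :: "('a::euclidean_space \<times> real) set \<Rightarrow> bool" where
  "smooth_submanifold_dimV M \<longleftrightarrow>
     (\<forall>p\<in>M. \<exists>U W (\<phi>::'a \<Rightarrow> 'a \<times> real) \<psi>.
        open U \<and> p \<in> U \<and> W \<noteq> {} \<and> smooth_on_open W \<phi> \<and>
        homeomorphism W (M \<inter> U) \<phi> \<psi> \<and>
        (\<forall>x\<in>W. inj (frechet_derivative \<phi> (at x))))"

definition monotone_on_line :: "('a::real_vector \<Rightarrow> real) \<Rightarrow> 'a \<Rightarrow> 'a \<Rightarrow> bool" where
  "monotone_on_line g w v \<longleftrightarrow>
     (\<forall>s t. s \<le> t \<longrightarrow> g (w + s *\<^sub>R v) \<le> g (w + t *\<^sub>R v)) \<or>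
     (\<forall>s t. s \<le> t \<longrightarrow> g (w + s *\<^sub>R v) \<ge> g (w + t *\<^sub>R v))"

definition line :: "'a::real_vector \<Rightarrow> 'a \<Rightarrow> 'a set" where
  "line w v = {w + s *\<^sub>R v | s. True}"

definition dichotomous_IRHS :: "('a::euclidean_space \<times> real) set \<Rightarrow> bool" where
  "dichotomous_IRHS M \<longleftrightarrow>
     smooth_submanifold_dimV M \<and> M \<subseteq> UNIV \<times> {0..1} \<and>
     (\<forall>v w. \<exists>g. (\<forall>x\<in>line w v. g x \<in> {0..1}) \<and>
        M \<inter> (line w v \<times> {0..1}) = {(x, g x) | x. x \<in> line w v} \<and>
        monotone_on_line g w v)"

end

theory Submission
  imports Defs
begin

text \<open>The line condition makes \<open>f\<close> monotone along every segment, so the strict sub- and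
  superlevel sets of \<open>f\<close> are convex and so are their complements. The manifold condition
  makes \<open>f\<close> continuous (invariance of domain applied to the first coordinate of a chart),
  so these level sets are open, and an open convex set with convex complement is an open
  half-space. Hence \<open>{f < f w}\<close> and \<open>{f > f w}\<close> are disjoint open half-spaces; in the plane
  their boundary lines are parallel, and \<open>f\<close> is constant along the line through \<open>w\<close> in
  that direction.\<close>

lemma continuous_on_if_graph_locally_homeomorphic:
  fixes f :: "'a::euclidean_space \<Rightarrow> real"
  assumes charts: "\<And>x. \<exists>U W (\<phi>::'a \<Rightarrow> 'a \<times> real) \<psi>. open U \<and> (x, f x) \<in> U \<and> open W \<and>
      homeomorphism W (range (\<lambda>x. (x, f x)) \<inter> U) \<phi> \<psi>"
  shows "continuous_on UNIV f"
proof -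
  have "isCont f x" for x
  proof -
    obtain U W and \<phi> :: "'a \<Rightarrow> 'a \<times> real" and \<psi> where U: "open U" "(x, f x) \<in> U"
      and "open W" and hom: "homeomorphism W (range (\<lambda>x. (x, f x)) \<inter> U) \<phi> \<psi>"
      using charts by blast
    have img: "\<phi> ` W = range (\<lambda>x. (x, f x)) \<inter> U" and "continuous_on W \<phi>"
      and \<psi>\<phi>: "\<And>z. z \<in> W \<Longrightarrow> \<psi> (\<phi> z) = z"
      and \<phi>\<psi>: "\<And>q. q \<in> range (\<lambda>x. (x, f x)) \<inter> U \<Longrightarrow> \<phi> (\<psi> q) = q"
      and \<psi>W: "\<psi> ` (range (\<lambda>x. (x, f x)) \<inter> U) = W"
      using hom unfolding homeomorphism_def by auto
    define p where "p = fst \<circ> \<phi>"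
    have \<phi>_graph: "\<phi> z = (p z, f (p z))" if "z \<in> W" for z
    proof -
      have "\<phi> z \<in> range (\<lambda>x. (x, f x))"
        using img that by blast
      then show ?thesis
        unfolding p_def by auto
    qed
    have cont_p: "continuous_on W p"
      unfolding p_def using \<open>continuous_on W \<phi>\<close> by (intro continuous_on_compose continuous_intros)
    have inj_p: "inj_on p W"
      by (rule inj_onI) (metis \<phi>_graph \<psi>\<phi>)
    have "open (p ` W)"
      using invariance_of_domain[OF cont_p \<open>open W\<close> inj_p] .
    moreover have "x \<in> p ` W"
    proof
      show "\<psi> (x, f x) \<in> W" using \<psi>W U by auto
      show "x = p (\<psi> (x, f x))" using \<phi>\<psi> U unfolding p_def by auto
    qed
    moreover have "continuous_on (p ` W) f"
    proof -
      have inv: "continuous_on (p ` W) (inv_into W p)"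
        by (rule continuous_on_inverse_open[OF \<open>open W\<close> cont_p]) (auto simp: inj_p)
      have "continuous_on W (\<lambda>z. snd (\<phi> z))"
        using \<open>continuous_on W \<phi>\<close> by (rule continuous_on_snd)
      then have "continuous_on (p ` W) (\<lambda>y. snd (\<phi> (inv_into W p y)))"
        by (rule continuous_on_compose2[OF _ inv]) (auto simp: inv_into_into)
      moreover have "snd (\<phi> (inv_into W p y)) = f y" if "y \<in> p ` W" for y
        using \<phi>_graph[of "inv_into W p y"] that by (simp add: inv_into_into f_inv_into_f)
      ultimately show ?thesis
        using continuous_on_cong by fastforce
    qed
    ultimately show "isCont f x"
      using continuous_on_eq_continuous_at by blast
  qed
  then show ?thesis
    by (simp add: continuous_at_imp_continuous_on)
qed

lemma continuous_on_if_graph_submanifold: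
  fixes f :: "'a::euclidean_space \<Rightarrow> real"
  assumes "smooth_submanifold_dimV (range (\<lambda>x. (x, f x)))"
  shows "continuous_on UNIV f"
proof (rule continuous_on_if_graph_locally_homeomorphic)
  fix x
  obtain U W and \<phi> :: "'a \<Rightarrow> 'a \<times> real" and \<psi> where "open U" "(x, f x) \<in> U"
    "smooth_on_open W \<phi>" "homeomorphism W (range (\<lambda>x. (x, f x)) \<inter> U) \<phi> \<psi>"
    using assms[unfolded smooth_submanifold_dimV_def, rule_format, of "(x, f x)"] by blast
  then show "\<exists>U W (\<phi>::'a \<Rightarrow> 'a \<times> real) \<psi>. open U \<and> (x, f x) \<in> U \<and> open W \<and>
      homeomorphism W (range (\<lambda>x. (x, f x)) \<inter> U) \<phi> \<psi>"
    unfolding smooth_on_open_def by blast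
qed

lemma monotone_on_line_if_dichotomous_IRHS:
  fixes f :: "'a::euclidean_space \<Rightarrow> real"
  assumes "dichotomous_IRHS (range (\<lambda>x. (x, f x)))"
  shows "monotone_on_line f w v"
proof -
  obtain g where g: "range (\<lambda>x. (x, f x)) \<inter> (line w v \<times> {0..1}) = {(x, g x) | x. x \<in> line w v}"
    and "monotone_on_line g w v"
    using assms unfolding dichotomous_IRHS_def by blast
  have "g x = f x" if "x \<in> line w v" for x
  proof -
    have "(x, f x) \<in> UNIV \<times> {0..1}"
      using assms unfolding dichotomous_IRHS_def by blast
    then have "(x, f x) \<in> {(x, g x) | x. x \<in> line w v}"
      using that by (auto simp flip: g)
    then show ?thesis by simp
  qed
  moreover have "w + s *\<^sub>R v \<in> line w v" for s
    unfolding line_def by blast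
  ultimately show ?thesis
    using \<open>monotone_on_line g w v\<close> unfolding monotone_on_line_def by simp
qed

lemma between_on_segment_if_monotone_on_lines:
  fixes f :: "'a::real_vector \<Rightarrow> real"
  assumes "\<And>w v. monotone_on_line f w v" and z: "z \<in> closed_segment x y"
  shows "min (f x) (f y) \<le> f z \<and> f z \<le> max (f x) (f y)"
proof -
  obtain u where u: "0 \<le> u" "u \<le> 1" and z_eq: "z = x + u *\<^sub>R (y - x)"
    using z by (auto simp: in_segment algebra_simps)
  define g where "g s = f (x + s *\<^sub>R (y - x))" for s
  have "(\<forall>s t. s \<le> t \<longrightarrow> g s \<le> g t) \<or> (\<forall>s t. s \<le> t \<longrightarrow> g t \<le> g s)"
    using assms(1)[of x "y - x"] unfolding monotone_on_line_def g_def .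
  then have "g 0 \<le> g u \<and> g u \<le> g 1 \<or> g 1 \<le> g u \<and> g u \<le> g 0"
    using u by blast
  moreover have "g 0 = f x" "g 1 = f y" "g u = f z"
    by (simp_all add: g_def z_eq)
  ultimately show ?thesis
    by linarith
qed

lemma convex_level_sets_if_between_on_segments:
  fixes f :: "'a::real_vector \<Rightarrow> real"
  assumes "\<And>x y z. z \<in> closed_segment x y \<Longrightarrow> min (f x) (f y) \<le> f z \<and> f z \<le> max (f x) (f y)"
  shows "convex {x. f x < c}" "convex {x. c \<le> f x}" "convex {x. c < f x}" "convex {x. f x \<le> c}"
  unfolding convex_contains_segment using assms by (fastforce dest: assms)+

lemma open_halfspace_if_convex_complement:
  fixes S :: "'a::euclidean_space set"
  assumes "open S" "convex S" "convex (- S)"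
  shows "\<exists>a b. S = {x. a \<bullet> x < b}"
proof (cases "S = {} \<or> S = UNIV")
  case True
  then show ?thesis
  proof
    assume "S = {}"
    then show ?thesis by (intro exI[of _ 0]) auto
  next
    assume "S = UNIV"
    then show ?thesis by (intro exI[of _ 0] exI[of _ 1]) auto
  qed
next
  case False
  then obtain a b where "a \<noteq> 0" and below: "\<forall>x\<in>S. a \<bullet> x \<le> b" and above: "\<forall>x\<in>- S. b \<le> a \<bullet> x"
    using separating_hyperplane_sets[OF assms(2,3)] by auto
  have "a \<bullet> x < b" if "x \<in> S" for x
  proof -
    obtain e where "e > 0" "ball x e \<subseteq> S"
      using \<open>open S\<close> \<open>x \<in> S\<close> open_contains_ball by blast
    define y where "y = x + (e / 2 / norm a) *\<^sub>R a"
    have "dist x y < e"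
      using \<open>e > 0\<close> \<open>a \<noteq> 0\<close> by (simp add: y_def dist_norm)
    then have "a \<bullet> y \<le> b"
      using below \<open>ball x e \<subseteq> S\<close> by auto
    moreover have "a \<bullet> y = a \<bullet> x + e / 2 * norm a"
      using \<open>a \<noteq> 0\<close> by (simp add: y_def inner_add_right dot_square_norm power2_eq_square)
    moreover have "e / 2 * norm a > 0"
      using \<open>e > 0\<close> \<open>a \<noteq> 0\<close> by simp
    ultimately show ?thesis by linarith
  qed
  then have "S = {x. a \<bullet> x < b}"
    using above by force
  then show ?thesis by blast
qed

lemma common_direction_of_disjoint_halfspaces:
  fixes a a' :: "'a::euclidean_space"
  assumes "DIM('a) = 2" and disjoint: "\<And>x. a \<bullet> x < b \<Longrightarrow> a' \<bullet> x < b' \<Longrightarrow> False"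
  obtains v where "v \<noteq> 0" "a \<bullet> v = 0" "a' \<bullet> v = 0"
proof (cases "a = 0")
  case True
  then show ?thesis
    using orthogonal_to_vector_exists[of a'] assms(1) that by (auto simp: orthogonal_def)
next
  case False
  obtain v where "v \<noteq> 0" "a \<bullet> v = 0"
    using orthogonal_to_vector_exists[of a] assms(1) by (auto simp: orthogonal_def)
  moreover have "a' \<bullet> v = 0"
  proof (rule ccontr)
    assume "a' \<bullet> v \<noteq> 0"
    \<comment> \<open>\<open>x0\<close> lies below the first hyperplane; moving along \<open>v\<close> keeps it there and reaches the other half-space.\<close>
    define x0 where "x0 = ((b - 1) / (a \<bullet> a)) *\<^sub>R a"
    define x where "x = x0 + ((b' - 1 - a' \<bullet> x0) / (a' \<bullet> v)) *\<^sub>R v"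
    have "a \<bullet> x = b - 1"
      using False \<open>a \<bullet> v = 0\<close> by (simp add: x_def x0_def inner_add_right)
    moreover have "a' \<bullet> x = b' - 1"
      using \<open>a' \<bullet> v \<noteq> 0\<close> by (simp add: x_def inner_add_right)
    ultimately show False
      using disjoint[of x] by simp
  qed
  ultimately show ?thesis
    using that by blast
qed

lemma strict_level_sets_halfspaces:
  fixes f :: "'a::euclidean_space \<Rightarrow> real"
  assumes "continuous_on UNIV f" and "\<And>w v. monotone_on_line f w v"
  obtains a b a' b' where "\<And>x. f x < c \<longleftrightarrow> a \<bullet> x < b" and "\<And>x. c < f x \<longleftrightarrow> a' \<bullet> x < b'"
proof -
  have "min (f x) (f y) \<le> f z \<and> f z \<le> max (f x) (f y)" if "z \<in> closed_segment x y" for x y z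
    using between_on_segment_if_monotone_on_lines assms(2) that by blast
  note convex = convex_level_sets_if_between_on_segments[of f c, OF this]
  have "- {x. f x < c} = {x. c \<le> f x}" "- {x. c < f x} = {x. f x \<le> c}"
    by auto
  then have "\<exists>a b. {x. f x < c} = {x. a \<bullet> x < b}" "\<exists>a b. {x. c < f x} = {x. a \<bullet> x < b}"
    using convex assms(1)
    by (auto intro!: open_halfspace_if_convex_complement simp: open_Collect_less)
  then show ?thesis
    using that by blast
qed

theorem lemma2:
  fixes M :: "('a::euclidean_space \<times> real) set" and f :: "'a \<Rightarrow> real"
  assumes "DIM('a) = 2"
    and "dichotomous_IRHS M"
    and "M = {(x, f x) | x. True}"
  shows "\<forall>w. \<exists>v. v \<noteq> 0 \<and> (\<forall>t::real. f (w + t *\<^sub>R v) = f w)"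
proof
  fix w
  have graph: "M = range (\<lambda>x. (x, f x))"
    using assms(3) by auto
  have "continuous_on UNIV f"
    using assms(2) continuous_on_if_graph_submanifold graph unfolding dichotomous_IRHS_def by blast
  moreover have "monotone_on_line f w' v" for w' v
    using monotone_on_line_if_dichotomous_IRHS assms(2) graph by blast
  ultimately obtain a b a' b' where below: "\<And>x. f x < f w \<longleftrightarrow> a \<bullet> x < b"
    and above: "\<And>x. f w < f x \<longleftrightarrow> a' \<bullet> x < b'"
    using strict_level_sets_halfspaces by blast
  obtain v where "v \<noteq> 0" "a \<bullet> v = 0" "a' \<bullet> v = 0"
    using common_direction_of_disjoint_halfspaces[OF assms(1), of a b a' b'] below above
    by (metis less_asym)
  moreover have "f (w + t *\<^sub>R v) = f w" for t
  proof -
    have "a \<bullet> (w + t *\<^sub>R v) = a \<bullet> w" "a' \<bullet> (w + t *\<^sub>R v) = a' \<bullet> w"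
      using \<open>a \<bullet> v = 0\<close> \<open>a' \<bullet> v = 0\<close> by (simp_all add: inner_add_right)
    then show ?thesis
      using below[of w] below[of "w + t *\<^sub>R v"] above[of w] above[of "w + t *\<^sub>R v"] by linarith
  qed
  ultimately show "\<exists>v. v \<noteq> 0 \<and> (\<forall>t. f (w + t *\<^sub>R v) = f w)"
    by blast
qed

end
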